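(* Let $N,k,d$ be integers with $N>k\geq 1$ and $d\geq 1$, and let $j$ be any non-negative integer. Define the rational number \[ w(\sigma_{(N-k)d+j-1}(\mathcal{O}_{h^{N-2-j}})\mathcal{O}_{h^{0}})_{0,2}:=\frac{1}{(2 \pi \sqrt{-1})^{d+1}} \oint_{C_{0}} \frac{dz_{0}}{(z_{0})^{N}} \oint_{C_{1}} \frac{dz_{1}}{(z_{1})^{N}} \cdots \oint_{C_{d}} \frac{dz_{d}}{(z_{d})^{N}}\,(z_{0})^{N-2-j} (z_{1} - z_{0})^{(N-k)d+j-1} \Bigl(\prod_{l=1}^{d} e^{k}(z_{l-1},z_{l}) \Bigr)\prod_{l=1}^{d-1} \frac{1}{kz_{l} (2z_{l} - z_{l-1} - z_{l+1})}, \] where $e^{k}(z,w)=\prod_{i=0}^{k}(iz+(k-i)w)$. Then \[ \frac{1}{k}\,w(\sigma_{(N-k)d+j-1}(\mathcal{O}_{h^{N-2-j}})\mathcal{O}_{h^{0}})_{0,2}=\frac{1}{j!}\frac{\partial^{j}}{\partial \varepsilon^{j}}\left.\left(\frac{\prod_{r=1}^{kd}(r+k\varepsilon)}{\prod_{r=1}^{d}(r+\varepsilon)^N}\right) \right|_{\varepsilon=0}. \]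
   Context: In the residue integral, the operation $\frac{1}{2 \pi \sqrt{-1}} \oint_{C_{i}} dz_{i}$ means taking residues at $z_{i} = 0$ for $i = 0$ and $i=d$, and taking (the sum of) residues at $z_{i} = 0$ and $z_i=\frac{z_{i-1} + z_{i+1}}{2}$ for $i = 1 , \ldots , d-1$. The residue integrals are taken in ascending order with respect to the subscript of the $z_{i}$'s (i.e. from left to right as written: first $z_0$, then $z_1$, ..., finally $z_d$). An empty product (e.g. $\prod_{l=1}^{d-1}$ when $d=1$) equals $1$. The symbol $w(\sigma_{(N-k)d+j-1}(\mathcal{O}_{h^{N-2-j}})\mathcal{O}_{h^{0}})_{0,2}$ is just a name for the number defined by this residue integral (for $0\le j\le N-2$ it is an intersection number on the moduli space of quasimaps from $CP^1$ with two marked points to $CP^{N-1}$ of degree $d$). *)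

theory Defs
  imports "HOL-Complex_Analysis.Complex_Analysis"
begin

definition ek :: "nat \<Rightarrow> complex \<Rightarrow> complex \<Rightarrow> complex" where
  "ek k z w = (\<Prod>i=0..k. of_nat i * z + of_nat (k - i) * w)"

text \<open>The factor z_0^(N-2-j) / z_0^N is written as z_0 powi (-2-j), which is
  meaningful also when j > N-2.\<close>
definition integrand :: "nat \<Rightarrow> nat \<Rightarrow> nat \<Rightarrow> nat \<Rightarrow> (nat \<Rightarrow> complex) \<Rightarrow> complex" where
  "integrand N k d j z =
     z 0 powi (- 2 - int j) / (\<Prod>i=1..d. z i ^ N)
     * (z 1 - z 0) ^ ((N - k) * d + j - 1)
     * (\<Prod>l=1..d. ek k (z (l - 1)) (z l))
     * (\<Prod>l=1..d-1. inverse (of_nat k * z l * (2 * z l - z (l - 1) - z (l + 1))))"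

text \<open>Branches of the iterated residue: a choice list records, for the
  variables z_1,...,z_i already integrated (most recent first), whether the
  residue was taken at 0 (False) or at the "midpoint" pole (True).
  If z_{i-1} was resolved to c * z_i, the pole z_i = (z_{i-1}+z_{i+1})/2 is
  located at z_i = z_{i+1}/(2-c).  mid_coeff gives the coefficient c for
  the most recently integrated variable (z_0 is always resolved at 0).\<close>
fun mid_coeff :: "bool list \<Rightarrow> complex" where
  "mid_coeff [] = 0"
| "mid_coeff (b # bs) = (if b then 1 / (2 - mid_coeff bs) else 0)"

text \<open>branch_res F bs: the function of the remaining variables obtained from
  F by taking the residue in z_0 at 0, and then successively in z_1, ..., z_i
  (i = length bs) according to the choices bs (most recent first).\<close>
fun branch_res :: "((nat \<Rightarrow> complex) \<Rightarrow> complex) \<Rightarrow> bool list \<Rightarrow> (nat \<Rightarrow> complex) \<Rightarrow> complex" where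
  "branch_res F [] = (\<lambda>z. residue (\<lambda>w. F (z(0 := w))) 0)"
| "branch_res F (b # bs) =
     (\<lambda>z. residue (\<lambda>w. branch_res F bs (z(Suc (length bs) := w)))
            (if b then z (Suc (Suc (length bs))) / (2 - mid_coeff bs) else 0))"

text \<open>The full iterated residue: residue in z_0 at 0, in z_i (1 <= i <= d-1)
  at 0 and at (z_{i-1}+z_{i+1})/2 (summed over all branches), and finally in
  z_d at 0.  The result no longer depends on z; we evaluate at z = 0.\<close>
definition iter_res :: "nat \<Rightarrow> ((nat \<Rightarrow> complex) \<Rightarrow> complex) \<Rightarrow> complex" where
  "iter_res d F = (\<Sum>bs\<in>{bs. length bs = d - 1}.
      residue (\<lambda>w. branch_res F bs ((\<lambda>_. 0)(d := w))) 0)"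

definition w_number :: "nat \<Rightarrow> nat \<Rightarrow> nat \<Rightarrow> nat \<Rightarrow> complex" where
  "w_number N k d j = iter_res d (integrand N k d j)"

end

(* Along the branch that takes, in each z_i with 1 <= i <= d-1, the residue at the midpoint
   pole, the poles sit at z_i = p_i z_(i+1) with p_i = i/(i+1); every branch that takes the residue
   at z_i = 0 for some such i vanishes, because after the earlier residues the integrand is regular
   there.  The point is that after the residues in z_0, ..., z_(i-1) the integrand has the form
   B_i(z) [e^j] L_i(e) / (z_i - a_i(e) z_(i+1)),   a_i(e) = (i + e)/(i + 1 + e),
   a single simple pole in z_i that moves with a formal parameter e and sits at p_i z_(i+1) for e = 0
   (for i = 0 this is (z_1 - z_0)^j / z_0^(j+1) = [e^j] 1/(z_0 - (z_1 - z_0) e)).  Taking the residue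
   at the moving pole commutes with extracting the coefficient of e^j, so it amounts to substituting
   z_i = a_i(e) z_(i+1); since a_(i+1) = 1/(2 - a_i), the midpoint factor 1/(2 z_i - z_(i-1) - z_(i+1))
   turns into the next moving pole.  By homogeneity all powers of z_(i+1) cancel except one
   1/z_d at the top, and the weights telescope to
   L(e) = k prod_(r=1..kd) (r + k e) / prod_(r=1..d) (r + e)^N,
   a rational function with real coefficients, so its complex and real Taylor coefficients agree. *)

theory Submission
  imports Defs
begin

section \<open>Taylor coefficients and residues at a moving pole\<close>

lemma fps_mult_compose_nth:
  fixes F G H :: "'a::idom fps"
  assumes "fps_nth H 0 = 0"
  shows "fps_nth (F * (G oo H)) j = (\<Sum>n\<le>j. fps_nth G n * fps_nth (F * H ^ n) j)"
proof -
  define T where "T = (\<Sum>n\<le>j. fps_const (fps_nth G n) * H ^ n)"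
  have "fps_nth (G oo H) m = fps_nth T m" if "m \<le> j" for m
  proof -
    have "fps_nth T m = (\<Sum>n\<le>j. fps_nth G n * fps_nth (H ^ n) m)"
      by (simp add: T_def fps_sum_nth)
    also have "\<dots> = (\<Sum>n=0..m. fps_nth G n * fps_nth (H ^ n) m)"
      using that startsby_zero_power_prefix[OF assms] by (intro sum.mono_neutral_right) auto
    finally show ?thesis by (simp add: fps_compose_nth)
  qed
  then have "fps_nth (F * (G oo H)) j = fps_nth (F * T) j"
    unfolding fps_mult_nth by (intro sum.cong) auto
  then show ?thesis
    by (simp add: T_def sum_distrib_left fps_sum_nth mult.left_commute[of F])
qed

lemma fps_inverse_const_minus_X:
  fixes D :: "'a::field"
  assumes "D \<noteq> 0"
  shows "inverse (fps_const D - fps_X) = Abs_fps (\<lambda>n. inverse D ^ Suc n)"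
proof (rule fps_inverse_unique, rule fps_ext)
  fix n
  show "fps_nth ((fps_const D - fps_X) * Abs_fps (\<lambda>n. inverse D ^ Suc n)) n = fps_nth 1 n"
    using assms by (cases n) (simp_all add: algebra_simps mult.commute[of _ fps_X])
qed

lemma fps_expansion_mult_comp_nth:
  fixes L g h :: "complex \<Rightarrow> complex"
  assumes "L has_fps_expansion LL" "g has_fps_expansion G" "h has_fps_expansion H"
    and "fps_nth H 0 = 0"
  shows "fps_nth (fps_expansion (\<lambda>e. L e * g (h e)) 0) j =
           (\<Sum>n\<le>j. fps_nth G n * fps_nth (LL * H ^ n) j)"
proof -
  have "(\<lambda>e. L e * (g \<circ> h) e) has_fps_expansion LL * (G oo H)"
    using assms by (intro fps_expansion_intros) auto
  then show ?thesis
    using fps_mult_compose_nth[OF assms(4)] by (simp add: fps_expansion_eqI)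
qed

lemma fps_expansion_cmult_left:
  fixes f :: "complex \<Rightarrow> complex"
  assumes "f analytic_on {0}"
  shows "fps_expansion (\<lambda>e. c * f e) 0 = fps_const c * fps_expansion f 0"
  using assms by (intro fps_expansion_eqI fps_expansion_intros analytic_at_imp_has_fps_expansion_0)

lemma residue_mult_pole_sum:
  fixes B Phi :: "complex \<Rightarrow> complex"
  assumes "B analytic_on {p}"
    and "eventually (\<lambda>w. Phi w = B w * (\<Sum>n\<le>j. a n / (w - p) ^ Suc n)) (at p)"
  shows "residue Phi p = (\<Sum>n\<le>j. a n * fps_nth (fps_expansion B p) n)"
proof -
  define BB where "BB = fps_expansion B p"
  have "(\<lambda>x. B (p + x)) has_fps_expansion BB"
    unfolding BB_def using assms(1) by (rule analytic_at_imp_has_fps_expansion)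
  then have expansion: "(\<lambda>x. \<Sum>n\<le>j. a n * (B (p + x) * x powi - int (Suc n))) has_laurent_expansion
      (\<Sum>n\<le>j. fls_const (a n) * fls_shift (int (Suc n)) (fps_to_fls BB))"
    by (intro laurent_expansion_intros has_laurent_expansion_fps)
  have "eventually (\<lambda>w. Phi w = (\<Sum>n\<le>j. a n * (B w * (w - p) powi - int (Suc n)))) (at p)"
    using assms(2) by eventually_elim
      (simp only: power_int_minus power_int_of_nat, simp add: sum_distrib_left divide_inverse mult_ac)
  then have "residue Phi p = residue (\<lambda>w. \<Sum>n\<le>j. a n * (B w * (w - p) powi - int (Suc n))) p"
    by (rule residue_cong) simp
  also have "\<dots> = fls_residue (\<Sum>n\<le>j. fls_const (a n) * fls_shift (int (Suc n)) (fps_to_fls BB))"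
    using expansion by (intro has_laurent_expansion_residue) simp
  also have "\<dots> = (\<Sum>n\<le>j. a n * fps_nth BB n)"
    by (simp add: fls_nth_sum)
  finally show ?thesis by (simp add: BB_def)
qed

lemma fps_expansion_div_pole_nth:
  fixes L \<beta> :: "complex \<Rightarrow> complex"
  assumes "L analytic_on {0}" "\<beta> analytic_on {0}" "x \<noteq> \<beta> 0"
  shows "fps_nth (fps_expansion (\<lambda>e. L e / (x - \<beta> e)) 0) j =
           (\<Sum>n\<le>j. fps_nth (fps_expansion L 0 * fps_expansion (\<lambda>e. \<beta> e - \<beta> 0) 0 ^ n) j
                     / (x - \<beta> 0) ^ Suc n)"
proof -
  define D where "D = x - \<beta> 0"
  have "D \<noteq> 0" using assms(3) by (simp add: D_def)
  have "(\<lambda>u. inverse (D - u)) has_fps_expansion inverse (fps_const D - fps_X)"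
    using \<open>D \<noteq> 0\<close> by (intro fps_expansion_intros) auto
  moreover have "(\<lambda>e. \<beta> e - \<beta> 0) has_fps_expansion fps_expansion (\<lambda>e. \<beta> e - \<beta> 0) 0"
    using assms(2) by (intro analytic_at_imp_has_fps_expansion_0 analytic_intros)
  moreover have "fps_nth (fps_expansion (\<lambda>e. \<beta> e - \<beta> 0) 0) 0 = 0"
    by (simp add: fps_expansion_def)
  ultimately have "fps_nth (fps_expansion (\<lambda>e. L e * inverse (D - (\<beta> e - \<beta> 0))) 0) j =
      (\<Sum>n\<le>j. inverse D ^ Suc n * fps_nth (fps_expansion L 0 * fps_expansion (\<lambda>e. \<beta> e - \<beta> 0) 0 ^ n) j)"
    using assms(1) \<open>D \<noteq> 0\<close>
    by (subst fps_expansion_mult_comp_nth[where g = "\<lambda>u. inverse (D - u)"])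
      (auto intro: analytic_at_imp_has_fps_expansion_0 simp: fps_inverse_const_minus_X)
  then show ?thesis
    by (simp add: D_def divide_inverse power_inverse mult.commute)
qed

text \<open>Taking the residue at the pole \<open>\<beta> 0\<close> commutes with extracting a Taylor coefficient
  in \<open>e\<close>.\<close>

lemma residue_fps_expansion_div_pole:
  fixes L \<beta> B Phi :: "complex \<Rightarrow> complex"
  assumes L: "L analytic_on {0}" and \<beta>: "\<beta> analytic_on {0}" and B: "B analytic_on {\<beta> 0}"
    and Phi: "eventually (\<lambda>w. Phi w = B w * fps_nth (fps_expansion (\<lambda>e. L e / (w - \<beta> e)) 0) j)
                (at (\<beta> 0))"
  shows "residue Phi (\<beta> 0) = fps_nth (fps_expansion (\<lambda>e. L e * B (\<beta> e)) 0) j"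
proof -
  define H where "H = fps_expansion (\<lambda>e. \<beta> e - \<beta> 0) 0"
  define \<gamma> where "\<gamma> n = fps_nth (fps_expansion L 0 * H ^ n) j" for n
  have "eventually (\<lambda>w. Phi w = B w * (\<Sum>n\<le>j. \<gamma> n / (w - \<beta> 0) ^ Suc n)) (at (\<beta> 0))"
    using Phi eventually_neq_at_within[of "\<beta> 0"]
    by eventually_elim (simp add: fps_expansion_div_pole_nth[OF L \<beta>] \<gamma>_def H_def)
  then have "residue Phi (\<beta> 0) = (\<Sum>n\<le>j. \<gamma> n * fps_nth (fps_expansion B (\<beta> 0)) n)"
    by (rule residue_mult_pole_sum[OF B])
  also have "\<dots> = fps_nth (fps_expansion (\<lambda>e. L e * B (\<beta> 0 + (\<beta> e - \<beta> 0))) 0) j"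
  proof -
    have "(\<lambda>u. B (\<beta> 0 + u)) has_fps_expansion fps_expansion B (\<beta> 0)"
      using B by (rule analytic_at_imp_has_fps_expansion)
    moreover have "(\<lambda>e. \<beta> e - \<beta> 0) has_fps_expansion H"
      unfolding H_def using \<beta> by (intro analytic_at_imp_has_fps_expansion_0 analytic_intros)
    moreover have "fps_nth H 0 = 0"
      by (simp add: H_def fps_expansion_def)
    ultimately have "fps_nth (fps_expansion (\<lambda>e. L e * B (\<beta> 0 + (\<beta> e - \<beta> 0))) 0) j =
        (\<Sum>n\<le>j. fps_nth (fps_expansion B (\<beta> 0)) n * fps_nth (fps_expansion L 0 * H ^ n) j)"
      using analytic_at_imp_has_fps_expansion_0[OF L] by (intro fps_expansion_mult_comp_nth)
    then show ?thesis
      by (simp only: \<gamma>_def mult.commute)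
  qed
  finally show ?thesis by simp
qed

lemma residue_fps_expansion_div_pole_eq_0:
  fixes L \<beta> B Phi :: "complex \<Rightarrow> complex"
  assumes L: "L analytic_on {0}" and \<beta>: "\<beta> analytic_on {0}" and B: "B analytic_on {q}"
    and "q \<noteq> \<beta> 0"
    and Phi: "eventually (\<lambda>w. Phi w = B w * fps_nth (fps_expansion (\<lambda>e. L e / (w - \<beta> e)) 0) j) (at q)"
  shows "residue Phi q = 0"
proof -
  define \<gamma> where "\<gamma> n = fps_nth (fps_expansion L 0 * fps_expansion (\<lambda>e. \<beta> e - \<beta> 0) 0 ^ n) j" for n
  define R where "R w = B w * (\<Sum>n\<le>j. \<gamma> n / (w - \<beta> 0) ^ Suc n)" for w
  have "eventually (\<lambda>w. Phi w = R w) (at q)"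
    using Phi eventually_neq_at_within[of "\<beta> 0"]
    by eventually_elim (simp add: fps_expansion_div_pole_nth[OF L \<beta>] \<gamma>_def R_def)
  then have "residue Phi q = residue R q"
    by (rule residue_cong) simp
  moreover have "R analytic_on {q}"
    unfolding R_def[abs_def] using B \<open>q \<noteq> \<beta> 0\<close> by (intro analytic_intros) auto
  then obtain S where "open S" "q \<in> S" "R holomorphic_on S"
    by (auto simp: analytic_at)
  ultimately show ?thesis
    using residue_holo by simp
qed

section \<open>Higher derivatives of a real function with a holomorphic extension\<close>

lemma deriv_complex_of_real:
  fixes f :: "complex \<Rightarrow> complex" and g :: "real \<Rightarrow> real"
  assumes holo: "f holomorphic_on ball 0 r"
    and eq: "\<And>t. \<bar>t\<bar> < r \<Longrightarrow> f (of_real t) = of_real (g t)"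
    and "\<bar>x\<bar> < r"
  shows "deriv f (of_real x) = of_real (deriv g x)"
proof -
  define D where "D = deriv f (of_real x)"
  have "(f has_field_derivative D) (at (of_real x))"
    unfolding D_def using holo \<open>\<bar>x\<bar> < r\<close> by (intro holomorphic_derivI[of _ "ball 0 r"]) auto
  then have "((\<lambda>t. f (of_real t)) has_vector_derivative D) (at x)"
    by (rule has_vector_derivative_real_field)
  then have "((\<lambda>t. of_real (g t)) has_vector_derivative D) (at x)"
    by (rule has_vector_derivative_transform_within_open[where S = "{-r<..<r}"])
      (use \<open>\<bar>x\<bar> < r\<close> eq in \<open>auto simp: abs_less_iff\<close>)
  then have "(g has_vector_derivative Re D) (at x)" "((\<lambda>t. 0) has_vector_derivative Im D) (at x)"
    using bounded_linear.has_vector_derivative[OF bounded_linear_Re]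
      bounded_linear.has_vector_derivative[OF bounded_linear_Im] by fastforce+
  then have "(g has_real_derivative Re D) (at x)" "Im D = 0"
    using vector_derivative_unique_at[OF _ has_vector_derivative_const]
    by (auto simp: has_real_derivative_iff_has_vector_derivative)
  then show ?thesis
    by (simp add: DERIV_imp_deriv D_def[symmetric] complex_eq_iff)
qed

lemma higher_deriv_complex_of_real:
  fixes f :: "complex \<Rightarrow> complex" and g :: "real \<Rightarrow> real"
  assumes holo: "f holomorphic_on ball 0 r"
    and eq: "\<And>t. \<bar>t\<bar> < r \<Longrightarrow> f (of_real t) = of_real (g t)"
    and "\<bar>x\<bar> < r"
  shows "(deriv ^^ n) f (of_real x) = of_real ((deriv ^^ n) g x)"
  using \<open>\<bar>x\<bar> < r\<close>
proof (induction n arbitrary: x)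
  case 0
  then show ?case
    using eq by simp
next
  case (Suc n)
  have "(deriv ^^ n) f holomorphic_on ball 0 r"
    using holo by (rule holomorphic_higher_deriv) simp
  then show ?case
    using Suc by (simp add: deriv_complex_of_real)
qed

section \<open>Midpoint ratios and the factor \<open>e^k\<close>\<close>

lemma of_nat_Suc_plus_neq_0:
  fixes e :: complex
  assumes "norm e < 1"
  shows "of_nat (Suc m) + e \<noteq> 0"
proof
  assume "of_nat (Suc m) + e = 0"
  then have "e = - of_nat (Suc m)"
    by (simp add: add_eq_0_iff del: of_nat_Suc)
  with assms show False
    by (simp del: of_nat_Suc)
qed

lemma eventually_of_nat_Suc_plus_neq_0:
  "eventually (\<lambda>e::complex. \<forall>m. of_nat (Suc m) + e \<noteq> 0) (nhds 0)"
proof -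
  have "eventually (\<lambda>e::complex. e \<in> ball 0 1) (nhds 0)"
    by (intro eventually_nhds_in_open) auto
  then show ?thesis
    by eventually_elim (auto dest: of_nat_Suc_plus_neq_0)
qed

text \<open>The ratio \<open>a_i(e)\<close> of the moving pole; \<open>mid_ratio i 0 = i/(i+1)\<close> is that of the
  midpoint pole.\<close>

definition mid_ratio :: "nat \<Rightarrow> complex \<Rightarrow> complex" where
  "mid_ratio i e = (of_nat i + e) / (of_nat (Suc i) + e)"

lemma mid_ratio_analytic: "mid_ratio i analytic_on {0}"
  unfolding mid_ratio_def[abs_def]
  by (intro analytic_intros) (simp del: of_nat_Suc)

lemma mid_ratio_Suc:
  assumes "of_nat (Suc i) + e \<noteq> 0" "of_nat (Suc (Suc i)) + e \<noteq> 0"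
  shows "mid_ratio (Suc i) e * (2 - mid_ratio i e) = 1"
proof -
  define A where "A = of_nat (Suc i) + e"
  have ratios: "mid_ratio i e = (A - 1) / A" "mid_ratio (Suc i) e = A / (A + 1)"
    by (simp_all add: mid_ratio_def A_def algebra_simps)
  have "A \<noteq> 0" "A + 1 \<noteq> 0"
    using assms by (simp_all add: A_def add_ac)
  moreover from \<open>A \<noteq> 0\<close> have "2 - (A - 1) / A = (A + 1) / A"
    by (simp add: field_simps)
  ultimately show ?thesis
    unfolding ratios by simp
qed

lemma mid_ratio_Suc_0: "mid_ratio (Suc i) 0 = 1 / (2 - mid_ratio i 0)"
proof -
  have "mid_ratio (Suc i) 0 * (2 - mid_ratio i 0) = 1"
    by (rule mid_ratio_Suc) (simp_all del: of_nat_Suc)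
  then show ?thesis
    by (auto simp: eq_divide_eq)
qed

lemma mid_ratio_pole_neq:
  assumes "y \<noteq> mid_ratio (Suc i) 0 * w"
  shows "2 * y \<noteq> mid_ratio i 0 * y + w"
proof
  assume "2 * y = mid_ratio i 0 * y + w"
  then have "w = (2 - mid_ratio i 0) * y"
    by (simp add: algebra_simps)
  moreover have "mid_ratio (Suc i) 0 * (2 - mid_ratio i 0) = 1"
    by (rule mid_ratio_Suc) (simp_all del: of_nat_Suc)
  ultimately have "mid_ratio (Suc i) 0 * w = y"
    by (simp add: mult.assoc[symmetric])
  with assms show False
    by simp
qed

lemma mid_coeff_replicate_True: "mid_coeff (replicate i True) = mid_ratio i 0"
  by (induction i) (simp_all add: mid_ratio_Suc_0, simp add: mid_ratio_def)

lemma mid_ratio_mult: "of_nat (Suc i) + e \<noteq> 0 \<Longrightarrow> mid_ratio i e * (of_nat (Suc i) + e) = of_nat i + e"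
  by (simp add: mid_ratio_def)

lemma inverse_mid_denominator:
  fixes a b c y w :: complex
  assumes "b * (2 - a) = 1" "y \<noteq> 0"
  shows "y * inverse (c * y * (2 * y - a * y - w)) = b / c * inverse (y - b * w)"
proof -
  define X where "X = 2 * y - a * y - w"
  have "b * X = b * (2 - a) * y - b * w"
    by (simp add: X_def algebra_simps)
  then have "y - b * w = b * X"
    using assms(1) by simp
  moreover have "b \<noteq> 0"
    using assms(1) by auto
  moreover have "y * inverse (c * y * X) = (y * inverse y) * (inverse c * inverse X)"
    "b / c * inverse (b * X) = (b * inverse b) * (inverse c * inverse X)"
    by (simp_all only: inverse_mult_distrib divide_inverse mult_ac)
  ultimately show ?thesis
    using assms(2) by (simp add: X_def)
qed

definition ek_cofactor :: "nat \<Rightarrow> complex \<Rightarrow> complex \<Rightarrow> complex" where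
  "ek_cofactor k x y = of_nat k ^ 2 * y * (\<Prod>r=1..k-1. of_nat r * x + of_nat (k - r) * y)"

lemma ek_cofactor_analytic [analytic_intros]:
  "f analytic_on A \<Longrightarrow> g analytic_on A \<Longrightarrow> (\<lambda>e. ek_cofactor k (f e) (g e)) analytic_on A"
  unfolding ek_cofactor_def by (intro analytic_intros)

lemma ek_eq_mult_cofactor:
  assumes "1 \<le> k"
  shows "ek k x y = x * ek_cofactor k x y"
proof -
  define g where "g i = of_nat i * x + of_nat (k - i) * y" for i
  have "{0..k} = insert 0 (insert k {1..k-1})"
    using assms by auto
  then have "ek k x y = g 0 * g k * prod g {1..k-1}"
    using assms by (simp add: ek_def g_def[abs_def])
  then show ?thesis
    by (simp add: ek_cofactor_def g_def power2_eq_square mult_ac)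
qed

lemma ek_cofactor_homogeneous:
  assumes "1 \<le> k"
  shows "ek_cofactor k (a * y) y = y ^ k * ek_cofactor k a 1"
proof -
  have "(\<Prod>r=1..k-1. of_nat r * (a * y) + of_nat (k - r) * y) =
        (\<Prod>r=1..k-1. y * (of_nat r * a + of_nat (k - r)))"
    by (intro prod.cong) (auto simp: algebra_simps)
  also have "\<dots> = y ^ (k - 1) * (\<Prod>r=1..k-1. of_nat r * a + of_nat (k - r))"
    by (simp add: prod.distrib)
  finally show ?thesis
    using assms by (simp add: ek_cofactor_def power_eq_if[of y k] mult_ac)
qed

lemma ek_cofactor_consecutive:
  assumes "1 \<le> k"
  shows "ek_cofactor k (of_nat i + e) (of_nat (Suc i) + e) =
           of_nat k * (\<Prod>r = k*i+1..k*i+k. of_nat r + of_nat k * e)"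
proof -
  define q where "q = of_nat (Suc i) + (e :: complex)"
  have block: "(\<Prod>r = k*i+1..k*i+k. of_nat r + of_nat k * e) = (\<Prod>r<k. of_nat k * q - of_nat r)"
    by (rule prod.reindex_bij_witness[where i = "\<lambda>r. k*i + k - r" and j = "\<lambda>r. k*i + k - r"])
      (auto simp: q_def of_nat_diff algebra_simps)
  have split: "{..<k} = insert 0 {1..k-1}"
    using assms by auto
  have "(\<Prod>r=1..k-1. of_nat r * (of_nat i + e) + of_nat (k - r) * q) =
        (\<Prod>r=1..k-1. of_nat k * q - of_nat r)"
    by (intro prod.cong) (auto simp: q_def of_nat_diff algebra_simps)
  then have "ek_cofactor k (of_nat i + e) q =
      of_nat k * (of_nat k * q * (\<Prod>r=1..k-1. of_nat k * q - of_nat r))"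
    by (simp add: ek_cofactor_def power2_eq_square mult_ac)
  also have "\<dots> = of_nat k * (\<Prod>r<k. of_nat k * q - of_nat r)"
    unfolding split by simp
  finally show ?thesis
    unfolding block q_def .
qed

section \<open>The midpoint branch of the iterated residue\<close>

locale w_number_setup =
  fixes N k d j :: nat
  assumes k_less_N: "k < N" and k_pos: "1 \<le> k" and d_pos: "1 \<le> d"
begin

definition z_exp :: "nat \<Rightarrow> nat" where
  "z_exp i = (N - k) * (d - i) - 1"

lemma z_exp_Suc: "Suc i < d \<Longrightarrow> z_exp i + k = z_exp (Suc i) + N"
proof -
  assume "Suc i < d"
  then have "d - i = Suc (d - Suc i)" "1 \<le> (N - k) * (d - Suc i)"
    using k_less_N by auto
  then show ?thesis
    using k_less_N by (simp add: z_exp_def)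
qed

lemma z_exp_last: "z_exp (d - 1) + k + 1 = N"
  using k_less_N d_pos by (simp add: z_exp_def)

definition lead :: "nat \<Rightarrow> complex \<Rightarrow> complex \<Rightarrow> complex" where
  "lead i x y = (if i = 0 then (y - x) ^ z_exp 0 else x ^ z_exp i)"

lemma lead_analytic [analytic_intros]:
  "f analytic_on A \<Longrightarrow> g analytic_on A \<Longrightarrow> (\<lambda>e. lead i (f e) (g e)) analytic_on A"
  unfolding lead_def by (cases "i = 0") (simp_all add: analytic_intros)

lemma lead_homogeneous: "lead i (a * y) y = lead i a 1 * y ^ z_exp i"
proof -
  have "y - a * y = (1 - a) * y"
    by (simp add: algebra_simps)
  then show ?thesis
    by (simp add: lead_def power_mult_distrib)
qed

definition mid_factor :: "(nat \<Rightarrow> complex) \<Rightarrow> nat \<Rightarrow> complex" where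
  "mid_factor z l = inverse (of_nat k * z l * (2 * z l - z (l - 1) - z (l + 1)))"

definition tail :: "nat \<Rightarrow> (nat \<Rightarrow> complex) \<Rightarrow> complex" where
  "tail i z = inverse (\<Prod>l=i+1..d. z l ^ N) * (\<Prod>l=i+2..d. ek k (z (l - 1)) (z l))
              * (\<Prod>l=i+2..d-1. mid_factor z l)"

text \<open>\<open>block i z\<close> is the factor \<open>B_i(z)\<close>: what is left of the integrand after the residues in
  \<open>z_0, ..., z_(i-1)\<close>, apart from the moving pole in \<open>z_i\<close>.\<close>

definition block :: "nat \<Rightarrow> (nat \<Rightarrow> complex) \<Rightarrow> complex" where
  "block i z = lead i (z i) (z (i+1)) * ek_cofactor k (z i) (z (i+1))
               * (if i + 1 < d then mid_factor z (i+1) else 1) * tail i z"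

lemma tail_upd: "tail i (z(i := w)) = tail i z"
  unfolding tail_def mid_factor_def
  by (intro arg_cong2[where f = "(*)"] arg_cong[where f = inverse] prod.cong) auto

lemma tail_Suc:
  assumes "i + 2 \<le> d"
  shows "tail i z = inverse (z (i+1) ^ N) * ek k (z (i+1)) (z (i+2))
                    * (if i + 2 < d then mid_factor z (i+2) else 1) * tail (i+1) z"
proof -
  have "(\<Prod>l=i+1..d. z l ^ N) = z (i+1) ^ N * (\<Prod>l=i+2..d. z l ^ N)"
       "(\<Prod>l=i+2..d. ek k (z (l - 1)) (z l)) = ek k (z (i+1)) (z (i+2)) * (\<Prod>l=i+3..d. ek k (z (l - 1)) (z l))"
    using assms by (simp_all add: prod.atLeast_Suc_atMost numeral_3_eq_3 numeral_2_eq_2)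
  moreover have "(\<Prod>l=i+2..d-1. mid_factor z l) =
      (if i + 2 < d then mid_factor z (i+2) else 1) * (\<Prod>l=i+3..d-1. mid_factor z l)"
    by (simp add: prod.atLeast_Suc_atMost numeral_3_eq_3 numeral_2_eq_2)
  ultimately show ?thesis
    by (simp add: tail_def numeral_3_eq_3 numeral_2_eq_2 mult_ac)
qed

lemma tail_last: "tail (d - 1) z = inverse (z d ^ N)"
  using d_pos by (simp add: tail_def)

lemma block_upd:
  assumes "i < d"
  shows "block i (z(i := w)) = lead i w (z (Suc i)) * ek_cofactor k w (z (Suc i))
     * (if Suc i < d then inverse (of_nat k * z (Suc i) * (2 * z (Suc i) - w - z (Suc (Suc i)))) else 1)
     * tail i z"
  using assms by (simp add: block_def mid_factor_def tail_upd)

lemma block_analytic: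
  assumes "i < d" "z (Suc i) \<noteq> 0" "Suc i < d \<Longrightarrow> 2 * z (Suc i) \<noteq> q + z (Suc (Suc i))"
  shows "(\<lambda>w. block i (z(i := w))) analytic_on {q}"
proof (cases "Suc i < d")
  case True
  with assms have "2 * z (Suc i) - q - z (Suc (Suc i)) \<noteq> 0"
    by (simp add: diff_diff_eq)
  with True assms(2) k_pos show ?thesis
    unfolding block_upd[OF assms(1)] by (auto intro!: analytic_intros)
qed (simp add: block_upd[OF assms(1)] analytic_intros)


lemma integrand_eq_block:
  assumes "z 0 \<noteq> 0"
  shows "integrand N k d j z = block 0 z * ((z 1 - z 0) ^ j / z 0 ^ Suc j)"
proof -
  define P where "P = (\<Prod>l=1..d. z l ^ N)"
  define E where "E = (\<Prod>l=2..d. ek k (z (l - 1)) (z l))"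
  define M where "M = (\<Prod>l=2..d-1. mid_factor z l)"
  define M1 where "M1 = (if 1 < d then mid_factor z 1 else 1)"
  have "(\<Prod>l=1..d. ek k (z (l - 1)) (z l)) = z 0 * ek_cofactor k (z 0) (z 1) * E"
    using d_pos k_pos by (simp add: E_def prod.atLeast_Suc_atMost ek_eq_mult_cofactor numeral_2_eq_2)
  moreover have "(\<Prod>l=1..d-1. inverse (of_nat k * z l * (2 * z l - z (l - 1) - z (l + 1)))) = M1 * M"
    using d_pos by (cases "1 < d") (simp_all add: M1_def M_def mid_factor_def prod.atLeast_Suc_atMost numeral_2_eq_2)
  moreover have "- 2 - int j = - int (Suc (Suc j))"
    by simp
  then have "z 0 powi (- 2 - int j) = inverse (z 0 ^ Suc (Suc j))"
    by (simp only: power_int_minus power_int_of_nat)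
  moreover have "(N - k) * d + j - 1 = z_exp 0 + j"
    using k_less_N d_pos by (simp add: z_exp_def)
  ultimately have "integrand N k d j z = (z 1 - z 0) ^ z_exp 0 * ek_cofactor k (z 0) (z 1) * M1
      * (inverse P * E * M) * ((z 1 - z 0) ^ j * (z 0 * inverse (z 0 ^ Suc (Suc j))))"
    by (simp add: integrand_def P_def power_add divide_inverse mult_ac)
  moreover have "z 0 * inverse (z 0 ^ Suc (Suc j)) = inverse (z 0 ^ Suc j)"
    using assms by (simp add: field_simps)
  moreover have "block 0 z = (z 1 - z 0) ^ z_exp 0 * ek_cofactor k (z 0) (z 1) * M1 * (inverse P * E * M)"
    by (simp add: block_def lead_def tail_def P_def E_def M_def M1_def numeral_2_eq_2)
  ultimately show ?thesis
    by (simp only: divide_inverse)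
qed

text \<open>\<open>weight i\<close> is \<open>L_i\<close>; the factor \<open>mid_ratio (Suc i) e / k\<close> comes from the midpoint factor
  \<open>1/(k z_(i+1) (2 z_(i+1) - z_i - z_(i+2)))\<close> at \<open>z_i = a_i(e) z_(i+1)\<close>.\<close>

primrec weight :: "nat \<Rightarrow> complex \<Rightarrow> complex" where
  "weight 0 e = 1 / (1 + e)"
| "weight (Suc i) e = weight i e * lead i (mid_ratio i e) 1 * ek_cofactor k (mid_ratio i e) 1
                      * mid_ratio (Suc i) e / of_nat k"

definition top_weight :: "complex \<Rightarrow> complex" where
  "top_weight e = weight (d - 1) e * lead (d - 1) (mid_ratio (d - 1) e) 1
                  * ek_cofactor k (mid_ratio (d - 1) e) 1"

lemma weight_analytic: "weight i analytic_on {0}"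
proof (induction i)
  case 0
  have "(\<lambda>e. 1 / (1 + e)) analytic_on {0 :: complex}"
    by (intro analytic_intros) auto
  then show ?case
    by (simp add: fun_eq_iff)
next
  case (Suc i)
  have "(\<lambda>e. weight i e * lead i (mid_ratio i e) 1 * ek_cofactor k (mid_ratio i e) 1
           * mid_ratio (Suc i) e / of_nat k) analytic_on {0}"
    using k_pos by (intro analytic_intros Suc mid_ratio_analytic) auto
  then show ?case
    by (simp add: fun_eq_iff)
qed

lemma top_weight_analytic: "top_weight analytic_on {0}"
  unfolding top_weight_def[abs_def] by (intro analytic_intros weight_analytic mid_ratio_analytic)

definition pole_coeff :: "nat \<Rightarrow> complex \<Rightarrow> complex \<Rightarrow> complex" where
  "pole_coeff i x y = fps_nth (fps_expansion (\<lambda>e. weight i e / (x - mid_ratio i e * y)) 0) j"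

lemma pole_coeff_0:
  assumes "x \<noteq> 0"
  shows "pole_coeff 0 x y = (y - x) ^ j / x ^ Suc j"
proof -
  have "eventually (\<lambda>e. weight 0 e / (x - mid_ratio 0 e * y) = inverse (x - (y - x) * e)) (nhds 0)"
    using eventually_of_nat_Suc_plus_neq_0
  proof eventually_elim
    case (elim e)
    from elim[rule_format, of 0] have "1 + e \<noteq> 0"
      by simp
    then show ?case
      by (simp add: mid_ratio_def field_simps)
  qed
  then have "pole_coeff 0 x y = fps_nth (fps_expansion (\<lambda>e. inverse (x - (y - x) * e)) 0) j"
    unfolding pole_coeff_def by (simp add: fps_expansion_cong)
  moreover have "(\<lambda>e. inverse (x - (y - x) * e)) has_fps_expansion
               (inverse (fps_const x - fps_X) oo (fps_const (y - x) * fps_X))"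
  proof -
    have "(\<lambda>u. inverse (x - u)) has_fps_expansion inverse (fps_const x - fps_X)"
      using assms by (intro fps_expansion_intros) auto
    moreover have "(\<lambda>e. (y - x) * e) has_fps_expansion fps_const (y - x) * fps_X"
      by (intro fps_expansion_intros)
    ultimately show ?thesis
      using has_fps_expansion_compose by (fastforce simp: o_def)
  qed
  ultimately show ?thesis
    using assms by (simp add: fps_expansion_eqI fps_inverse_const_minus_X power_inverse divide_inverse)
qed

primrec main_branch :: "nat \<Rightarrow> (nat \<Rightarrow> complex) \<Rightarrow> complex" where
  "main_branch 0 = integrand N k d j"
| "main_branch (Suc i) = (\<lambda>z. residue (\<lambda>w. main_branch i (z(i := w))) (mid_ratio i 0 * z (Suc i)))"

lemma branch_res_replicate_True:
  "branch_res (integrand N k d j) (replicate i True) = main_branch (Suc i)"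
  by (induction i) (simp_all add: mid_coeff_replicate_True mid_ratio_Suc_0, simp add: mid_ratio_def)


lemma block_subst_mid_ratio:
  assumes "Suc i < d" "z (Suc i) \<noteq> 0"
    and "of_nat (Suc i) + e \<noteq> 0" "of_nat (Suc (Suc i)) + e \<noteq> 0"
  shows "weight i e * block i (z(i := mid_ratio i e * z (Suc i))) =
         block (Suc i) z * (weight (Suc i) e / (z (Suc i) - mid_ratio (Suc i) e * z (Suc (Suc i))))"
proof -
  define y w a b where "y = z (Suc i)" and "w = z (Suc (Suc i))"
    and "a = mid_ratio i e" and "b = mid_ratio (Suc i) e"
  define R where "R = ek_cofactor k y w * (if Suc (Suc i) < d then mid_factor z (Suc (Suc i)) else 1)
                      * tail (Suc i) z"
  have "y \<noteq> 0"
    using assms(2) by (simp add: y_def)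
  have block_Suc: "block (Suc i) z = y ^ z_exp (Suc i) * R"
    by (simp add: block_def lead_def R_def y_def w_def mult_ac)
  have tail: "tail i z = inverse (y ^ N) * y * R"
    using assms(1) k_pos
    by (simp add: tail_Suc R_def y_def w_def ek_eq_mult_cofactor numeral_2_eq_2 mult_ac)
  have "y ^ z_exp i * y ^ k = y ^ z_exp (Suc i) * y ^ N"
    using z_exp_Suc[OF assms(1)] by (simp flip: power_add)
  then have powers: "y ^ z_exp i * y ^ k * inverse (y ^ N) = y ^ z_exp (Suc i)"
    using \<open>y \<noteq> 0\<close> by (simp add: mult.assoc)
  have weight_Suc: "weight (Suc i) e = weight i e * lead i a 1 * ek_cofactor k a 1 * b / of_nat k"
    by (simp add: a_def b_def)
  have mid: "y * inverse (of_nat k * y * (2 * y - a * y - w)) = b / of_nat k * inverse (y - b * w)"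
    using mid_ratio_Suc[OF assms(3,4)] \<open>y \<noteq> 0\<close> unfolding a_def b_def by (rule inverse_mid_denominator)
  have "weight i e * block i (z(i := a * y)) =
      weight i e * (lead i a 1 * y ^ z_exp i) * (y ^ k * ek_cofactor k a 1)
      * inverse (of_nat k * y * (2 * y - a * y - w)) * (inverse (y ^ N) * y * R)"
    using assms(1) k_pos
    by (simp add: block_upd lead_homogeneous ek_cofactor_homogeneous tail y_def w_def)
  also have "\<dots> = weight i e * lead i a 1 * ek_cofactor k a 1 * R
      * (y ^ z_exp i * y ^ k * inverse (y ^ N)) * (y * inverse (of_nat k * y * (2 * y - a * y - w)))"
    by (simp only: mult_ac)
  also have "\<dots> = block (Suc i) z * (weight (Suc i) e / (y - b * w))"
    unfolding powers mid block_Suc weight_Suc by (simp only: divide_inverse mult_ac)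
  finally show ?thesis
    by (simp only: a_def b_def y_def w_def)
qed

lemma block_subst_mid_ratio_last:
  assumes "z d \<noteq> 0"
  shows "weight (d - 1) e * block (d - 1) (z(d - 1 := mid_ratio (d - 1) e * z d)) = top_weight e / z d"
proof -
  define y a where "y = z d" and "a = mid_ratio (d - 1) e"
  have "y \<noteq> 0"
    using assms by (simp add: y_def)
  have d: "Suc (d - 1) = d"
    using d_pos by simp
  have "y ^ N = y ^ (z_exp (d - 1) + k + 1)"
    by (simp only: z_exp_last)
  then have "y ^ N = y ^ z_exp (d - 1) * y ^ k * y"
    by (simp add: power_add)
  then have "y ^ z_exp (d - 1) * y ^ k * inverse (y ^ N) = inverse y"
    using \<open>y \<noteq> 0\<close> by (simp add: field_simps)
  moreover have "block (d - 1) (z(d - 1 := a * y)) =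
      lead (d - 1) a 1 * ek_cofactor k a 1 * (y ^ z_exp (d - 1) * y ^ k * inverse (y ^ N))"
    using d_pos k_pos tail_last[of z]
    by (simp add: block_upd d lead_homogeneous ek_cofactor_homogeneous y_def mult_ac)
  ultimately show ?thesis
    by (simp only: top_weight_def a_def y_def divide_inverse mult_ac)
qed

lemma main_branch_eq_block:
  assumes "i < d" "\<forall>l. i \<le> l \<and> l \<le> d \<longrightarrow> z l \<noteq> 0" "z i \<noteq> mid_ratio i 0 * z (Suc i)"
  shows "main_branch i z = block i z * pole_coeff i (z i) (z (Suc i))"
  using assms
proof (induction i arbitrary: z)
  case 0
  then show ?case
    by (simp add: integrand_eq_block pole_coeff_0)
next
  case (Suc i)
  define y w where "y = z (Suc i)" and "w = z (Suc (Suc i))"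
  have "y \<noteq> 0" "y \<noteq> mid_ratio (Suc i) 0 * w"
    using Suc.prems by (auto simp: y_def w_def)
  have pole: "eventually (\<lambda>v. main_branch i (z(i := v)) = block i (z(i := v))
      * fps_nth (fps_expansion (\<lambda>e. weight i e / (v - mid_ratio i e * y)) 0) j) (at (mid_ratio i 0 * y))"
    using eventually_neq_at_within[of 0] eventually_neq_at_within[of "mid_ratio i 0 * y"]
  proof eventually_elim
    case (elim v)
    with Suc.prems have "main_branch i (z(i := v)) = block i (z(i := v)) * pole_coeff i v y"
      by (subst Suc.IH) (auto simp: y_def)
    then show ?case
      by (simp add: pole_coeff_def)
  qed
  have "(\<lambda>e. mid_ratio i e * y) analytic_on {0}"
    by (intro analytic_intros mid_ratio_analytic)
  moreover have "(\<lambda>v. block i (z(i := v))) analytic_on {mid_ratio i 0 * y}"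
    using Suc.prems(1) \<open>y \<noteq> 0\<close> mid_ratio_pole_neq[OF \<open>y \<noteq> mid_ratio (Suc i) 0 * w\<close>]
    by (intro block_analytic) (auto simp: y_def w_def)
  ultimately have residue: "main_branch (Suc i) z =
      fps_nth (fps_expansion (\<lambda>e. weight i e * block i (z(i := mid_ratio i e * y))) 0) j"
    using residue_fps_expansion_div_pole[OF weight_analytic _ _ pole] by (simp add: y_def)
  have "eventually (\<lambda>e. weight i e * block i (z(i := mid_ratio i e * y)) =
      block (Suc i) z * (weight (Suc i) e / (y - mid_ratio (Suc i) e * w))) (nhds 0)"
    using eventually_of_nat_Suc_plus_neq_0
  proof eventually_elim
    case (elim e)
    with Suc.prems(1) \<open>y \<noteq> 0\<close> show ?case
      by (simp add: block_subst_mid_ratio y_def w_def del: of_nat_Suc)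
  qed
  then have "fps_expansion (\<lambda>e. weight i e * block i (z(i := mid_ratio i e * y))) 0 =
      fps_expansion (\<lambda>e. block (Suc i) z * (weight (Suc i) e / (y - mid_ratio (Suc i) e * w))) 0"
    by (rule fps_expansion_cong)
  also have "\<dots> = fps_const (block (Suc i) z) *
      fps_expansion (\<lambda>e. weight (Suc i) e / (y - mid_ratio (Suc i) e * w)) 0"
    using \<open>y \<noteq> mid_ratio (Suc i) 0 * w\<close>
    by (intro fps_expansion_cmult_left analytic_intros weight_analytic mid_ratio_analytic) auto
  finally show ?case
    unfolding residue pole_coeff_def by (simp only: y_def w_def fps_mult_left_const_nth)
qed

lemma main_branch_top:
  assumes "z d \<noteq> 0"
  shows "main_branch d z = fps_nth (fps_expansion top_weight 0) j / z d"
proof -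
  obtain i where i: "Suc i = d"
    using d_pos by (cases d) auto
  define y where "y = z d"
  have pole: "eventually (\<lambda>v. main_branch i (z(i := v)) = block i (z(i := v))
      * fps_nth (fps_expansion (\<lambda>e. weight i e / (v - mid_ratio i e * y)) 0) j) (at (mid_ratio i 0 * y))"
    using eventually_neq_at_within[of 0] eventually_neq_at_within[of "mid_ratio i 0 * y"]
  proof eventually_elim
    case (elim v)
    then have "\<forall>l. i \<le> l \<and> l \<le> d \<longrightarrow> (z(i := v)) l \<noteq> 0"
      using assms i le_Suc_eq by auto
    with elim i have "main_branch i (z(i := v)) = block i (z(i := v)) * pole_coeff i v y"
      by (subst main_branch_eq_block) (auto simp: y_def)
    then show ?case
      by (simp add: pole_coeff_def)
  qed
  have "(\<lambda>e. mid_ratio i e * y) analytic_on {0}"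
    by (intro analytic_intros mid_ratio_analytic)
  moreover have "(\<lambda>v. block i (z(i := v))) analytic_on {mid_ratio i 0 * y}"
    using assms i by (intro block_analytic) (auto simp: y_def)
  ultimately have "main_branch d z =
      fps_nth (fps_expansion (\<lambda>e. weight i e * block i (z(i := mid_ratio i e * y))) 0) j"
    using residue_fps_expansion_div_pole[OF weight_analytic _ _ pole] main_branch.simps(2)[of i, unfolded i]
    by (simp add: y_def)
  also have "(\<lambda>e. weight i e * block i (z(i := mid_ratio i e * y))) = (\<lambda>e. inverse y * top_weight e)"
    using block_subst_mid_ratio_last[of z, OF assms] i by (auto simp: y_def field_simps)
  also have "fps_expansion \<dots> 0 = fps_const (inverse y) * fps_expansion top_weight 0"
    by (rule fps_expansion_cmult_left[OF top_weight_analytic])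
  finally show ?thesis
    by (simp add: y_def field_simps)
qed

lemma branch_res_eq_0:
  assumes "False \<in> set bs" "length bs < d"
    and "\<forall>l. length bs < l \<and> l \<le> d \<longrightarrow> z l \<noteq> 0 \<and> (l < d \<longrightarrow> 2 * z l \<noteq> z (Suc l))"
  shows "branch_res (integrand N k d j) bs z = 0"
  using assms
proof (induction bs arbitrary: z)
  case Nil
  then show ?case by simp
next
  case (Cons b bs)
  define v where "v = Suc (length bs)"
  have "v < d"
    using Cons.prems(2) by (simp add: v_def)
  show ?case
  proof (cases "False \<in> set bs")
    case True
    have "eventually (\<lambda>w. branch_res (integrand N k d j) bs (z(v := w)) = 0) (at p)" for p
      using eventually_neq_at_within[of 0] eventually_neq_at_within[of "z (Suc v) / 2"]
    proof eventually_elim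
      case (elim w)
      with Cons.prems \<open>v < d\<close> show ?case
        by (intro Cons.IH[OF True]) (auto simp: v_def field_simps)
    qed
    then show ?thesis
      by (simp add: v_def residue_cong[where g = "\<lambda>_. 0"] residue_const)
  next
    case False
    with Cons.prems(1) have "b = False"
      by auto
    from False have "replicate (length bs) True = bs"
      by (induction bs) auto
    then have branch: "branch_res (integrand N k d j) (b # bs) z =
        residue (\<lambda>w. main_branch v (z(v := w))) 0"
      using branch_res_replicate_True[of "length bs"] \<open>b = False\<close> by (simp add: v_def)
    define y where "y = z (Suc v)"
    have "y \<noteq> 0" "Suc v < d \<Longrightarrow> 2 * y \<noteq> z (Suc (Suc v))"
      using Cons.prems(3) \<open>v < d\<close> by (auto simp: y_def v_def)
    have pole: "eventually (\<lambda>w. main_branch v (z(v := w)) = block v (z(v := w))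
        * fps_nth (fps_expansion (\<lambda>e. weight v e / (w - mid_ratio v e * y)) 0) j) (at 0)"
      using eventually_neq_at_within[of 0] eventually_neq_at_within[of "mid_ratio v 0 * y"]
    proof eventually_elim
      case (elim w)
      with Cons.prems(3) \<open>v < d\<close>
      have "main_branch v (z(v := w)) = block v (z(v := w)) * pole_coeff v w y"
        by (subst main_branch_eq_block) (auto simp: y_def v_def)
      then show ?case
        by (simp add: pole_coeff_def)
    qed
    have "mid_ratio v 0 * y \<noteq> 0"
      using \<open>y \<noteq> 0\<close> by (simp add: mid_ratio_def v_def del: of_nat_Suc)
    moreover have "(\<lambda>e. mid_ratio v e * y) analytic_on {0}"
      by (intro analytic_intros mid_ratio_analytic)
    moreover have "(\<lambda>w. block v (z(v := w))) analytic_on {0}"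
      using \<open>v < d\<close> \<open>y \<noteq> 0\<close> \<open>Suc v < d \<Longrightarrow> 2 * y \<noteq> z (Suc (Suc v))\<close>
      by (intro block_analytic) (auto simp: y_def)
    ultimately show ?thesis
      using residue_fps_expansion_div_pole_eq_0[OF weight_analytic _ _ _ pole] branch by auto
  qed
qed

lemma w_number_eq_top_weight: "w_number N k d j = fps_nth (fps_expansion top_weight 0) j"
proof -
  define C where "C = fps_nth (fps_expansion top_weight 0) j"
  define S where "S = {bs :: bool list. length bs = d - 1}"
  define main where "main = replicate (d - 1) True"
  have branch: "residue (\<lambda>w. branch_res (integrand N k d j) bs ((\<lambda>_. 0)(d := w))) 0 =
      (if bs = main then C else 0)" if "bs \<in> S" for bs
  proof (cases "bs = main")
    case True
    have "branch_res (integrand N k d j) bs = main_branch d"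
      using d_pos True by (simp add: main_def branch_res_replicate_True)
    have "eventually (\<lambda>w. branch_res (integrand N k d j) bs ((\<lambda>_. 0)(d := w)) = C / (w - 0)) (at 0)"
      using eventually_neq_at_within[of 0 0 UNIV]
      by eventually_elim (simp add: \<open>branch_res (integrand N k d j) bs = main_branch d\<close> main_branch_top C_def)
    then have "residue (\<lambda>w. branch_res (integrand N k d j) bs ((\<lambda>_. 0)(d := w))) 0 = C"
      using residue_simple[of UNIV 0 "\<lambda>_. C"] by (simp add: residue_cong)
    with True show ?thesis
      by simp
  next
    case False
    have "False \<in> set bs"
    proof (rule ccontr)
      assume "False \<notin> set bs"
      then have "replicate (length bs) True = bs"
        by (induction bs) auto
      with False that show False
        by (simp add: S_def main_def)
    qed
    have "eventually (\<lambda>w. branch_res (integrand N k d j) bs ((\<lambda>_. 0)(d := w)) = 0) (at 0)"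
      using eventually_neq_at_within[of 0 0 UNIV]
    proof eventually_elim
      case (elim w)
      with \<open>False \<in> set bs\<close> that d_pos show ?case
        by (intro branch_res_eq_0) (auto simp: S_def)
    qed
    with False show ?thesis
      by (simp add: residue_cong[where g = "\<lambda>_. 0"] residue_const)
  qed
  have "finite S"
    using finite_lists_length_eq[of "UNIV :: bool set" "d - 1"] by (simp add: S_def)
  have "w_number N k d j = (\<Sum>bs\<in>S. residue (\<lambda>w. branch_res (integrand N k d j) bs ((\<lambda>_. 0)(d := w))) 0)"
    unfolding w_number_def iter_res_def S_def ..
  also have "\<dots> = (\<Sum>bs\<in>S. if bs = main then C else 0)"
    by (rule sum.cong) (simp_all add: branch)
  also have "\<dots> = C"
    using \<open>finite S\<close> by (simp add: S_def main_def)
  finally show ?thesis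
    by (simp add: C_def)
qed

section \<open>The closed form of the weights\<close>

definition num_prod :: "nat \<Rightarrow> complex \<Rightarrow> complex" where
  "num_prod m e = (\<Prod>r=1..m. of_nat r + of_nat k * e)"

definition den_prod :: "nat \<Rightarrow> complex \<Rightarrow> complex" where
  "den_prod i e = (\<Prod>r=1..i. (of_nat r + e) ^ N)"

lemma den_prod_Suc: "den_prod (Suc i) e = den_prod i e * (of_nat (Suc i) + e) ^ N"
  unfolding den_prod_def by simp

lemma num_prod_Suc:
  "num_prod (k * Suc i) e = num_prod (k * i) e * (\<Prod>r = k*i+1..k*i+k. of_nat r + of_nat k * e)"
proof -
  have "k * Suc i = k * i + k"
    by simp
  then show ?thesis
    unfolding num_prod_def by (simp only:) (rule prod.ub_add_nat, simp)
qed

lemma lead_ek_cofactor_mid_ratio: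
  assumes "of_nat (Suc i) + e \<noteq> 0"
  shows "lead i (mid_ratio i e) 1 * ek_cofactor k (mid_ratio i e) 1 * (of_nat (Suc i) + e) ^ (z_exp i + k)
           / of_nat k
       = lead i (of_nat i + e) (of_nat (Suc i) + e) * (\<Prod>r = k*i+1..k*i+k. of_nat r + of_nat k * e)"
proof -
  define q where "q = of_nat (Suc i) + e"
  have aq: "mid_ratio i e * q = of_nat i + e"
    unfolding q_def by (rule mid_ratio_mult[OF assms])
  have L: "lead i (mid_ratio i e) 1 * q ^ z_exp i = lead i (of_nat i + e) q"
    using lead_homogeneous[of i "mid_ratio i e" q] unfolding aq ..
  have "ek_cofactor k (mid_ratio i e) 1 * q ^ k = ek_cofactor k (of_nat i + e) q"
    using ek_cofactor_homogeneous[OF k_pos, of "mid_ratio i e" q] unfolding aq by (simp only: mult.commute)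
  also have "\<dots> = of_nat k * (\<Prod>r = k*i+1..k*i+k. of_nat r + of_nat k * e)"
    unfolding q_def by (rule ek_cofactor_consecutive[OF k_pos])
  finally have E: "ek_cofactor k (mid_ratio i e) 1 * q ^ k = of_nat k * (\<Prod>r = k*i+1..k*i+k. of_nat r + of_nat k * e)" .
  have "lead i (mid_ratio i e) 1 * ek_cofactor k (mid_ratio i e) 1 * q ^ (z_exp i + k) / of_nat k =
      (lead i (mid_ratio i e) 1 * q ^ z_exp i) * (ek_cofactor k (mid_ratio i e) 1 * q ^ k) / of_nat k"
    by (simp only: power_add mult_ac)
  also have "\<dots> = lead i (of_nat i + e) q * (\<Prod>r = k*i+1..k*i+k. of_nat r + of_nat k * e)"
    unfolding L E using k_pos by simp
  finally show ?thesis
    unfolding q_def .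
qed

lemma weight_closed_form:
  assumes "i < d" "\<forall>m. of_nat (Suc m) + e \<noteq> 0"
  shows "weight i e * (of_nat (Suc i) + e) * den_prod i e * lead i (of_nat i + e) (of_nat (Suc i) + e)
         = num_prod (k * i) e"
  using assms(1)
proof (induction i)
  case 0
  then show ?case
    using assms(2)[rule_format, of 0] by (simp add: den_prod_def num_prod_def lead_def)
next
  case (Suc i)
  define q q' where "q = of_nat (Suc i) + e" and "q' = of_nat (Suc (Suc i)) + e"
  have "q \<noteq> 0" "q' \<noteq> 0"
    using assms(2) unfolding q_def q'_def by blast+
  have ratio: "mid_ratio (Suc i) e * q' = q"
    using \<open>q' \<noteq> 0\<close> by (simp add: mid_ratio_def q_def q'_def)
  have powers: "q ^ N * q ^ z_exp (Suc i) = q ^ (z_exp i + k)"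
    unfolding z_exp_Suc[OF Suc.prems] by (simp add: power_add mult.commute)
  have "lead (Suc i) q q' = q ^ z_exp (Suc i)"
    by (simp add: lead_def)
  then have "weight (Suc i) e * q' * den_prod (Suc i) e * lead (Suc i) q q'
      = weight i e * den_prod i e / of_nat k * lead i (mid_ratio i e) 1 * ek_cofactor k (mid_ratio i e) 1
        * (mid_ratio (Suc i) e * q') * (q ^ N * q ^ z_exp (Suc i))"
    by (simp only: weight.simps den_prod_Suc[of i e, folded q_def] divide_inverse mult_ac)
  also have "\<dots> = weight i e * q * den_prod i e
      * (lead i (mid_ratio i e) 1 * ek_cofactor k (mid_ratio i e) 1 * q ^ (z_exp i + k) / of_nat k)"
    unfolding ratio powers by (simp only: divide_inverse mult_ac)
  also have "\<dots> = (weight i e * q * den_prod i e * lead i (of_nat i + e) q)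
      * (\<Prod>r = k*i+1..k*i+k. of_nat r + of_nat k * e)"
    unfolding lead_ek_cofactor_mid_ratio[of i e, folded q_def, OF \<open>q \<noteq> 0\<close>] by (simp only: mult_ac)
  also have "\<dots> = num_prod (k * Suc i) e"
    unfolding num_prod_Suc Suc.IH[OF Suc_lessD[OF Suc.prems], folded q_def] ..
  finally show ?case
    unfolding q_def q'_def .
qed

lemma top_weight_closed_form:
  assumes "\<forall>m. of_nat (Suc m) + e \<noteq> 0"
  shows "top_weight e * den_prod d e = of_nat k * num_prod (k * d) e"
proof -
  obtain i where i: "Suc i = d"
    using d_pos by (cases d) auto
  then have "d - 1 = i" "i < d"
    by simp_all
  define q where "q = of_nat (Suc i) + e"
  have "q \<noteq> 0"
    using assms unfolding q_def by blast
  have "q ^ N = q ^ Suc (z_exp i + k)"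
    using z_exp_last unfolding \<open>d - 1 = i\<close> by simp
  then have qN: "q ^ N = q * q ^ (z_exp i + k)"
    by (simp only: power_Suc)
  have "top_weight e = weight i e * lead i (mid_ratio i e) 1 * ek_cofactor k (mid_ratio i e) 1"
    unfolding top_weight_def \<open>d - 1 = i\<close> ..
  moreover have "den_prod d e = den_prod i e * q * q ^ (z_exp i + k)"
    using den_prod_Suc[of i e, folded q_def, unfolded i] by (simp add: qN mult.assoc)
  ultimately have "top_weight e * den_prod d e = weight i e * q * den_prod i e
      * (lead i (mid_ratio i e) 1 * ek_cofactor k (mid_ratio i e) 1 * q ^ (z_exp i + k))"
    by (simp only: mult_ac)
  also have "\<dots> = of_nat k * (weight i e * q * den_prod i e
      * (lead i (mid_ratio i e) 1 * ek_cofactor k (mid_ratio i e) 1 * q ^ (z_exp i + k) / of_nat k))"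
    using k_pos by simp
  also have "\<dots> = of_nat k * ((weight i e * q * den_prod i e * lead i (of_nat i + e) q)
      * (\<Prod>r = k*i+1..k*i+k. of_nat r + of_nat k * e))"
    unfolding lead_ek_cofactor_mid_ratio[of i e, folded q_def, OF \<open>q \<noteq> 0\<close>] by (simp only: mult_ac)
  also have "\<dots> = of_nat k * num_prod (k * d) e"
    unfolding num_prod_Suc[of i, unfolded i] weight_closed_form[OF \<open>i < d\<close> assms, folded q_def] ..
  finally show ?thesis .
qed

lemma den_prod_nonzero:
  assumes "\<forall>m. of_nat (Suc m) + e \<noteq> 0"
  shows "den_prod i e \<noteq> 0"
proof -
  have "of_nat r + e \<noteq> 0" if "1 \<le> r" for r
    using assms[rule_format, of "r - 1"] that by (simp del: of_nat_Suc)
  then show ?thesis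
    unfolding den_prod_def by simp
qed

lemma closed_form_holomorphic: "(\<lambda>e. num_prod (k * d) e / den_prod d e) holomorphic_on ball 0 1"
  using den_prod_nonzero[OF allI, OF of_nat_Suc_plus_neq_0]
  unfolding num_prod_def den_prod_def by (intro holomorphic_intros) auto

lemma w_number_eq_closed_form:
  "w_number N k d j = of_nat k * fps_nth (fps_expansion (\<lambda>e. num_prod (k * d) e / den_prod d e) 0) j"
proof -
  have "eventually (\<lambda>e. top_weight e = of_nat k * (num_prod (k * d) e / den_prod d e)) (nhds 0)"
    using eventually_of_nat_Suc_plus_neq_0
    by eventually_elim (simp add: top_weight_closed_form den_prod_nonzero eq_divide_eq)
  then have "fps_expansion top_weight 0 = fps_expansion (\<lambda>e. of_nat k * (num_prod (k * d) e / den_prod d e)) 0"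
    by (rule fps_expansion_cong)
  also have "\<dots> = fps_const (of_nat k) * fps_expansion (\<lambda>e. num_prod (k * d) e / den_prod d e) 0"
    using closed_form_holomorphic
    by (intro fps_expansion_cmult_left) (auto simp: analytic_at intro!: exI[of _ "ball 0 1"])
  finally show ?thesis
    by (simp add: w_number_eq_top_weight)
qed

end

theorem theorem1:
  fixes N k d j :: nat
  assumes "N > k" and "k \<ge> 1" and "d \<ge> 1"
  shows "w_number N k d j / of_nat k =
    of_real ((deriv ^^ j)
               (\<lambda>e::real. (\<Prod>r=1..k*d. real r + real k * e) / (\<Prod>r=1..d. (real r + e) ^ N)) 0
             / fact j)"
proof -
  interpret w_number_setup N k d j
    using assms by unfold_locales auto
  define f where "f e = num_prod (k * d) e / den_prod d e" for e
  define g where "g e = (\<Prod>r=1..k*d. real r + real k * e) / (\<Prod>r=1..d. (real r + e) ^ N)" for e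
  have "f holomorphic_on ball 0 1"
    unfolding f_def[abs_def] by (rule closed_form_holomorphic)
  moreover have "f (of_real t) = of_real (g t)" for t
    by (simp add: f_def g_def num_prod_def den_prod_def)
  ultimately have "(deriv ^^ j) f 0 = of_real ((deriv ^^ j) g 0)"
    using higher_deriv_complex_of_real[of f 1 g 0 j] by simp
  moreover have "w_number N k d j / of_nat k = (deriv ^^ j) f 0 / fact j"
    using assms(2) by (simp add: w_number_eq_closed_form fps_expansion_def f_def[abs_def])
  ultimately show ?thesis
    by (simp add: g_def[abs_def])
qed
end
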